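(* Let $\kappa$ be an uncountable cardinal, let $X$ be a set of cardinality at least $\kappa$, let $\Gamma$ be the group of all permutations of $X$ acting by application, and let $I_\kappa$ be the ideal of subsets of $X$ of cardinality less than $\kappa$. Then $\Gamma\curvearrowright X, I_\kappa$ has cofinal orbits if and only if $\kappa$ is a successor cardinal.
   Context: For a group $\Gamma$ acting on $X$ and a $\Gamma$-invariant ideal $I$ on $X$ containing all singletons, and $a\subseteq X$, $\mathrm{pstab}(a)=\{\gamma\in\Gamma:\gamma\cdot x=x\ \forall x\in a\}$. For $a,b\in I$, $b$ is $a$-large if for every $c\in I$ there is $\gamma\in\mathrm{pstab}(a)$ with $c\subseteq\gamma\cdot b$, where $\gamma\cdot b=\{\gamma\cdot x:x\in b\}$. The dynamical ideal has cofinal orbits if for every $a\in I$ there is an $a$-large $b\in I$. *)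

theory Defs
  imports Main "HOL-Combinatorics.Permutations"
begin

definition pstab :: "('a \<Rightarrow> 'a) set \<Rightarrow> 'a set \<Rightarrow> ('a \<Rightarrow> 'a) set" where
  "pstab G a = {g \<in> G. \<forall>x\<in>a. g x = x}"

definition is_large :: "('a \<Rightarrow> 'a) set \<Rightarrow> 'a set set \<Rightarrow> 'a set \<Rightarrow> 'a set \<Rightarrow> bool" where
  "is_large G I a b \<longleftrightarrow> (\<forall>c\<in>I. \<exists>g\<in>pstab G a. c \<subseteq> g ` b)"

definition cofinal_orbits :: "('a \<Rightarrow> 'a) set \<Rightarrow> 'a set set \<Rightarrow> bool" where
  "cofinal_orbits G I \<longleftrightarrow> (\<forall>a\<in>I. \<exists>b\<in>I. is_large G I a b)"

definition successor_cardinal :: "'k rel \<Rightarrow> bool" where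
  "successor_cardinal r \<longleftrightarrow> (\<exists>\<mu> :: 'k rel. Card_order \<mu> \<and> (r, cardSuc \<mu>) \<in> ordIso)"

end

theory Submission
  imports Defs
begin

text \<open>If \<open>\<kappa> = \<mu>\<^sup>+\<close>, the ideal consists of the sets of size at most \<open>\<mu>\<close>. Given such an \<open>a\<close>,
  the complement \<open>X - a\<close> still has size above \<open>\<mu>\<close>, so it contains a set \<open>d\<close> of size \<open>\<mu>\<close>, and
  \<open>b = a \<union> d\<close> is \<open>a\<close>-large: for small \<open>c\<close>, the sets \<open>d\<close> and \<open>d \<union> (c - a)\<close> have size \<open>\<mu>\<close> and
  co-size \<open>|X - a|\<close> in \<open>X - a\<close>, so a permutation of \<open>X - a\<close> maps the one onto the other.
  If \<open>\<kappa>\<close> is a limit cardinal, then for every \<open>b\<close> in the ideal the successor of \<open>|b|\<close> is still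
  below \<open>\<kappa>\<close>, and a subset of \<open>X\<close> of that size is in the ideal but fits into no image of \<open>b\<close>.\<close>

unbundle cardinal_syntax

lemma infinite_Field_if_natLeq_ordLess:
  assumes "Card_order r" "natLeq <o r"
  shows "infinite (Field r)"
proof
  assume "finite (Field r)"
  then have "|Field r| <o natLeq" by (simp add: finite_iff_ordLess_natLeq)
  then have "r <o natLeq"
    using card_of_Field_ordIso[OF assms(1)] ordIso_ordLess_trans ordIso_symmetric by blast
  then show False using assms(2) not_ordLess_ordIso ordLess_imp_ordLeq not_ordLess_ordLeq by blast
qed

lemma ex_subset_card_of_ordIso:
  assumes "Card_order r" "r \<le>o |X|"
  shows "\<exists>c\<subseteq>X. |c| =o r"
proof -
  have "|Field r| \<le>o |X|"
    using card_of_Field_ordIso[OF assms(1)] assms(2) by (rule ordIso_ordLeq_trans)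
  then obtain c where "c \<subseteq> X" "|Field r| =o |c|"
    using internalize_card_of_ordLeq2[THEN iffD1] by blast
  moreover have "|c| =o r"
    using ordIso_symmetric[OF calculation(2)] card_of_Field_ordIso[OF assms(1)]
    by (rule ordIso_transitive)
  ultimately show ?thesis by blast
qed

lemma card_of_Diff_ordIso:
  assumes "infinite Y" "|e| <o |Y|"
  shows "|Y - e| =o |Y|"
proof -
  have "|Y - e| \<le>o |Y|" by (rule card_of_mono1) auto
  moreover have "|Y| \<le>o |Y - e|"
  proof (rule ccontr)
    assume "\<not> |Y| \<le>o |Y - e|"
    then have "|Y - e| <o |Y|"
      using ordLess_or_ordLeq[OF card_of_Well_order card_of_Well_order] by blast
    then have "|(Y - e) \<union> e| <o |Y|"
      using card_of_Un_ordLess_infinite[OF assms(1)] assms(2) by blast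
    moreover have "|Y| \<le>o |(Y - e) \<union> e|" by (rule card_of_mono1) auto
    ultimately show False using not_ordLess_ordLeq by blast
  qed
  ultimately show ?thesis by (simp add: ordIso_iff_ordLeq)
qed

lemma ex_permutes_image_eq:
  assumes "d \<subseteq> Y" "e \<subseteq> Y" "|d| =o |e|" "|Y - d| =o |Y - e|"
  shows "\<exists>g. g permutes Y \<and> g ` d = e"
proof -
  obtain f1 where f1: "bij_betw f1 d e" using assms(3) card_of_ordIso by blast
  obtain f2 where f2: "bij_betw f2 (Y - d) (Y - e)" using assms(4) card_of_ordIso by blast
  define g where "g x = (if x \<in> d then f1 x else if x \<in> Y then f2 x else x)" for x
  have g_d: "bij_betw g d e"
    using f1 by (rule bij_betw_cong[THEN iffD1, rotated]) (simp add: g_def)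
  have "bij_betw g (Y - d) (Y - e)"
    using f2 by (rule bij_betw_cong[THEN iffD1, rotated]) (simp add: g_def)
  then have "bij_betw g (d \<union> (Y - d)) (e \<union> (Y - e))"
    by (rule bij_betw_combine[OF g_d]) auto
  then have "bij_betw g Y Y" using assms(1,2) by (simp add: Un_Diff_cancel Un_absorb1)
  moreover have "\<And>x. x \<notin> Y \<Longrightarrow> g x = x" using assms(1) by (auto simp: g_def)
  ultimately have "g permutes Y" by (rule bij_imp_permutes)
  with g_d show ?thesis by (auto simp: bij_betw_def)
qed

lemma not_is_large_if_not_successor_cardinal:
  fixes r :: "'k rel" and X :: "'a set"
  assumes "Card_order r" "\<not> successor_cardinal r" "r \<le>o |X|" "|b| <o r"
  shows "\<not> is_large G {c. c \<subseteq> X \<and> |c| <o r} a b"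
proof
  assume large: "is_large G {c. c \<subseteq> X \<and> |c| <o r} a b"
  obtain B where B: "B \<subseteq> Field r" "|b| =o |B|"
    using internalize_card_of_ordLeq[THEN iffD1, OF ordLess_imp_ordLeq[OF assms(4)]] by blast
  have "|B| <o r" using ordIso_symmetric[OF B(2)] assms(4) by (rule ordIso_ordLess_trans)
  then have "cardSuc |B| \<le>o r" by (rule cardSuc_least[OF card_of_Card_order assms(1)])
  moreover have "\<not> r =o cardSuc |B|"
    using assms(2) card_of_Card_order unfolding successor_cardinal_def by blast
  ultimately have suc_less: "cardSuc |B| <o r"
    using ordIso_symmetric ordLeq_iff_ordLess_or_ordIso by blast
  obtain c where c: "c \<subseteq> X" "|c| =o cardSuc |B|"
    using ex_subset_card_of_ordIso[OF cardSuc_Card_order[OF card_of_Card_order]]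
      ordLeq_transitive[OF ordLess_imp_ordLeq[OF suc_less] assms(3)] by blast
  have "|c| <o r" using c(2) suc_less by (rule ordIso_ordLess_trans)
  with large c(1) obtain g where "c \<subseteq> g ` b" unfolding is_large_def by blast
  then have "|c| \<le>o |b|" by (rule ordLeq_transitive[OF card_of_mono1 card_of_image])
  then have "|c| \<le>o |B|" using B(2) by (rule ordLeq_ordIso_trans)
  then have "|c| <o cardSuc |B|"
    using cardSuc_greater[OF card_of_Card_order] by (rule ordLeq_ordLess_trans)
  then show False using c(2) not_ordLess_ordIso by blast
qed

lemma ordLess_card_of_Diff:
  assumes "Card_order \<mu>" "infinite (Field \<mu>)" "|a| \<le>o \<mu>" "\<mu> <o |X|"
  shows "\<mu> <o |X - a|"
proof (rule ccontr)
  assume "\<not> \<mu> <o |X - a|"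
  then have "|X - a| \<le>o \<mu>"
    using ordLess_or_ordLeq[OF card_order_on_well_order_on[OF assms(1)] card_of_Well_order] by blast
  then have "|a \<union> (X - a)| \<le>o \<mu>"
    by (rule card_of_Un_ordLeq_infinite_Field[OF assms(2) assms(3) _ assms(1)])
  then have "|X| \<le>o \<mu>" using card_of_mono1[of X "a \<union> (X - a)"] ordLeq_transitive by blast
  then show False using assms(4) not_ordLess_ordLeq by blast
qed

lemma ex_permutes_fixing_covering:
  assumes "Card_order \<mu>" "infinite (Field \<mu>)" "d \<subseteq> X - a" "|d| =o \<mu>" "\<mu> <o |X - a|"
    "c \<subseteq> X" "|c| \<le>o \<mu>"
  shows "\<exists>g. g permutes X \<and> (\<forall>x\<in>a. g x = x) \<and> c \<subseteq> g ` (a \<union> d)"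
proof -
  define Y where "Y = X - a"
  define e where "e = (c - a) \<union> d"
  have d_le: "|d| \<le>o \<mu>" using assms(4) ordIso_iff_ordLeq by blast
  have "|c - a| \<le>o \<mu>" using card_of_mono1[of "c - a" c] assms(7) ordLeq_transitive by blast
  then have e_le: "|e| \<le>o \<mu>"
    unfolding e_def by (rule card_of_Un_ordLeq_infinite_Field[OF assms(2) _ d_le assms(1)])
  have "|d| =o |e|"
  proof -
    have "|d| \<le>o |e|" by (rule card_of_mono1) (auto simp: e_def)
    moreover have "|e| \<le>o |d|" using e_le ordIso_symmetric[OF assms(4)] by (rule ordLeq_ordIso_trans)
    ultimately show ?thesis by (simp add: ordIso_iff_ordLeq)
  qed
  moreover have "|Y - d| =o |Y - e|"
  proof -
    have "|Field \<mu>| \<le>o |Y|"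
      using card_of_Field_ordIso[OF assms(1)] ordLess_imp_ordLeq[OF assms(5)] unfolding Y_def
      by (rule ordIso_ordLeq_trans)
    then have Y_inf: "infinite Y" using assms(2) card_of_ordLeq_finite by blast
    have "|Y - d| =o |Y|"
      using card_of_Diff_ordIso[OF Y_inf ordLeq_ordLess_trans[OF d_le assms(5)[folded Y_def]]] .
    moreover have "|Y - e| =o |Y|"
      using card_of_Diff_ordIso[OF Y_inf ordLeq_ordLess_trans[OF e_le assms(5)[folded Y_def]]] .
    ultimately show ?thesis by (rule ordIso_transitive[OF _ ordIso_symmetric])
  qed
  moreover have "d \<subseteq> Y" "e \<subseteq> Y" using assms(3,6) unfolding Y_def e_def by auto
  ultimately obtain g where g: "g permutes Y" "g ` d = e"
    using ex_permutes_image_eq by blast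
  have "g permutes X" using g(1) permutes_subset unfolding Y_def by blast
  moreover have fix_a: "\<forall>x\<in>a. g x = x" using g(1) permutes_not_in unfolding Y_def by fastforce
  moreover have "c \<subseteq> g ` (a \<union> d)"
  proof -
    have "g ` a = a" using fix_a by simp
    then show ?thesis using g(2) unfolding e_def image_Un by blast
  qed
  ultimately show ?thesis by blast
qed

lemma card_of_ordLess_iff_ordLeq_if_ordIso_cardSuc:
  assumes "Card_order \<mu>" "r =o cardSuc \<mu>"
  shows "|A| <o r \<longleftrightarrow> |A| \<le>o \<mu>"
proof -
  have "|A| <o r \<longleftrightarrow> |A| <o cardSuc \<mu>"
    using ordLess_ordIso_trans[OF _ assms(2)] ordLess_ordIso_trans[OF _ ordIso_symmetric[OF assms(2)]]
    by blast
  also have "\<dots> \<longleftrightarrow> |A| \<le>o \<mu>" by (rule cardSuc_ordLeq_ordLess[OF assms(1) card_of_Card_order])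
  finally show ?thesis .
qed

theorem cofinal_orbits_permutes_card_ordLeq:
  assumes "Card_order \<mu>" "infinite (Field \<mu>)" "\<mu> <o |X|"
  shows "cofinal_orbits {f. f permutes X} {a. a \<subseteq> X \<and> |a| \<le>o \<mu>}"
    (is "cofinal_orbits ?G ?I")
  unfolding cofinal_orbits_def
proof
  fix a assume "a \<in> ?I"
  then have a: "a \<subseteq> X" "|a| \<le>o \<mu>" by auto
  have Diff_big: "\<mu> <o |X - a|" by (rule ordLess_card_of_Diff[OF assms(1,2) a(2) assms(3)])
  then obtain d where d: "d \<subseteq> X - a" "|d| =o \<mu>"
    using ex_subset_card_of_ordIso[OF assms(1) ordLess_imp_ordLeq] by blast
  have "|a \<union> d| \<le>o \<mu>"
    using card_of_Un_ordLeq_infinite_Field[OF assms(2) a(2) _ assms(1)] d(2) ordIso_iff_ordLeq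
    by blast
  moreover have "is_large ?G ?I a (a \<union> d)"
    unfolding is_large_def pstab_def
    using ex_permutes_fixing_covering[OF assms(1,2) d Diff_big] by blast
  ultimately show "\<exists>b\<in>?I. is_large ?G ?I a b"
    using a(1) d(1) by blast
qed

theorem mainTheorem6:
  fixes r :: "'k rel" and X :: "'a set"
  assumes "Card_order r"
    and "(natLeq, r) \<in> ordLess"
    and "(r, card_of X) \<in> ordLeq"
  shows "cofinal_orbits {f. f permutes X} {a. a \<subseteq> X \<and> (card_of a, r) \<in> ordLess}
         \<longleftrightarrow> successor_cardinal r"
proof
  assume cofinal: "cofinal_orbits {f. f permutes X} {a. a \<subseteq> X \<and> (card_of a, r) \<in> ordLess}"
  have "|{} :: 'a set| <o r"
    by (rule finite_ordLess_infinite[OF card_of_Well_order card_order_on_well_order_on[OF assms(1)]])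
      (simp_all add: Field_card_of infinite_Field_if_natLeq_ordLess[OF assms(1,2)])
  with cofinal obtain b where b: "|b| <o r"
    and large: "is_large {f. f permutes X} {a. a \<subseteq> X \<and> |a| <o r} {} b"
    unfolding cofinal_orbits_def by blast
  show "successor_cardinal r"
    using not_is_large_if_not_successor_cardinal[OF assms(1) _ assms(3) b] large by blast
next
  assume "successor_cardinal r"
  then obtain \<mu> :: "'k rel" where \<mu>: "Card_order \<mu>" "r =o cardSuc \<mu>"
    unfolding successor_cardinal_def by blast
  have "natLeq <o cardSuc \<mu>" by (rule ordLess_ordIso_trans[OF assms(2) \<mu>(2)])
  then have "infinite (Field (cardSuc \<mu>))"
    by (rule infinite_Field_if_natLeq_ordLess[OF cardSuc_Card_order[OF \<mu>(1)]])
  then have "infinite (Field \<mu>)" by (simp add: cardSuc_finite[OF \<mu>(1)])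
  moreover have "\<mu> <o |X|"
    using ordLess_ordIso_trans[OF cardSuc_greater[OF \<mu>(1)] ordIso_symmetric[OF \<mu>(2)]] assms(3)
    by (rule ordLess_ordLeq_trans)
  ultimately show "cofinal_orbits {f. f permutes X} {a. a \<subseteq> X \<and> (card_of a, r) \<in> ordLess}"
    using cofinal_orbits_permutes_card_ordLeq[OF \<mu>(1)]
    by (simp add: card_of_ordLess_iff_ordLeq_if_ordIso_cardSuc[OF \<mu>])
qed

end
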